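(* Let $f:[1,3]\to[1,3]$ be defined by $f(x)=-2x+5$ for $1\le x\le 2$ and $f(x)=x-1$ for $2\le x\le 3$. Then: (a) for every positive integer $m$, if $a_m$ denotes the number of distinct solutions $x\in[1,3]$ of $f^m(x)=x$, then $(a_m)_{m\ge1}$ is the Lucas sequence, i.e. $a_1=1$, $a_2=3$ and $a_{m+2}=a_{m+1}+a_m$ for all $m\ge1$; (b) for every positive integer $m$, $f$ has exactly $\Phi_1(m)/m$ distinct periodic orbits of minimal period $m$; (c) the sequence $(\Phi_1(m)/m)_{m\ge 6}$ is strictly increasing, and $\lim_{m\to\infty}\dfrac{\Phi_1(m+1)/(m+1)}{\Phi_1(m)/m}=\dfrac{1+\sqrt5}{2}$.
   Context: Here $f^m$ denotes the $m$-th iterate of $f$; a point $x$ has minimal period $m$ if $f^m(x)=x$ and its orbit $\{f^k(x):k\ge0\}$ has exactly $m$ elements. For an integer-valued function $\phi$ on the positive integers, define $\Phi(1,\phi)=\phi(1)$ and, if $m=p_1^{k_1}\cdots p_r^{k_r}$ with distinct primes $p_i$ and $r,k_i\ge1$, $\Phi(m,\phi)=\phi(m)-\sum_{i}\phi(m/p_i)+\sum_{i_1<i_2}\phi(m/(p_{i_1}p_{i_2}))-\cdots+(-1)^r\phi(m/(p_1\cdots p_r))$, the sums over indices in $\{1,\dots,r\}$ (equivalently $\Phi(m,\phi)=\sum_{d\mid m}\mu(m/d)\phi(d)$ with $\mu$ the Möbius function). Let $\phi$ be the Lucas sequence ($\phi(1)=1,\phi(2)=3,\phi(m+2)=\phi(m+1)+\phi(m)$)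 and set $\Phi_1(m)=\Phi(m,\phi)$. *)

theory Defs
  imports Complex_Main "HOL-Computational_Algebra.Primes"
begin

text \<open>The piecewise linear map on [1,3] (values outside [1,3] are irrelevant).\<close>
definition fmap :: "real \<Rightarrow> real" where
  "fmap x = (if x \<le> 2 then -2 * x + 5 else x - 1)"

text \<open>Lucas sequence: lucas 1 = 1, lucas 2 = 3, lucas (m+2) = lucas (m+1) + lucas m
  (lucas 0 = 2 is the usual convention, unused).\<close>
fun lucas :: "nat \<Rightarrow> int" where
  "lucas 0 = 2"
| "lucas (Suc 0) = 1"
| "lucas (Suc (Suc n)) = lucas (Suc n) + lucas n"

text \<open>The paper's inclusion-exclusion over distinct prime divisors of m;
  for m = 1 the set of prime factors is empty and this gives phi 1.\<close>
definition Phi :: "nat \<Rightarrow> (nat \<Rightarrow> int) \<Rightarrow> int" where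
  "Phi m phi = (\<Sum>S \<in> Pow (prime_factors m). (-1) ^ card S * phi (m div \<Prod>S))"

definition Phi1 :: "nat \<Rightarrow> int" where
  "Phi1 m = Phi m lucas"

definition orbit :: "(real \<Rightarrow> real) \<Rightarrow> real \<Rightarrow> real set" where
  "orbit g x = {(g ^^ k) x | k. True}"

definition has_min_period :: "(real \<Rightarrow> real) \<Rightarrow> nat \<Rightarrow> real \<Rightarrow> bool" where
  "has_min_period g m x \<longleftrightarrow> (g ^^ m) x = x \<and> finite (orbit g x) \<and> card (orbit g x) = m"

end

theory Submission
  imports Defs "HOL-Number_Theory.Fib"
begin

(* The map fmap has two monotone branches on [1,3]: the lower one on [1,2]
   (slope -2, onto [1,3]) and the upper one on [2,3] (slope 1, onto [1,2]).  Recording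
   for each point of an orbit whether it lies above 2 gives its itinerary, a word over
   bool in which the upper symbol True is never followed by True.

   (a) The fixed points of fmap^m in [1,3] correspond bijectively to the cyclically
   admissible words of length m (no two cyclically adjacent True's): a point goes to its
   itinerary, a word goes to the unique fixed point of the composition of inverse
   branches it prescribes, an affine contraction.  These words are counted by Lucas
   numbers, via a Fibonacci count of the linearly admissible words.
   (b) For any map, the fixed points of g^m split into the points of minimal period d,
   d dividing m, and the points of minimal period m split into orbits of size m.  So
   lucas m is the divisor sum of the numbers of points of minimal period, and
   inclusion-exclusion over the prime factors (Moebius inversion, the form Phi) shows
   that Phi1 m is the number of points of minimal period m.
   (c) From this divisor-sum relation and Phi1 >= 0 we get
   lucas m - sum_{k <= m/2} lucas k <= Phi1 m <= lucas m; together with Binet's formula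
   for the Lucas numbers this gives Phi1 m / phi^m --> 1 for the golden ratio phi, hence
   the limit of the ratios, and (with two exact small values) the monotonicity. *)


section \<open>Admissible words and their number\<close>

text \<open>True stands for the upper branch.  A word is admissible if no True is directly
  followed by True, and cyclically admissible if moreover its last letter and its first
  letter are not both True.\<close>

fun admissible :: "bool list \<Rightarrow> bool" where
  "admissible (a # b # w) \<longleftrightarrow> \<not> (a \<and> b) \<and> admissible (b # w)"
| "admissible _ \<longleftrightarrow> True"

definition cyc_admissible :: "bool list \<Rightarrow> bool" where
  "cyc_admissible w \<longleftrightarrow> admissible w \<and> (w \<noteq> [] \<longrightarrow> \<not> (last w \<and> hd w))"

definition adm_words :: "nat \<Rightarrow> bool list set" where
  "adm_words n = {w. length w = n \<and> admissible w}"

definition cyc_words :: "nat \<Rightarrow> bool list set" where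
  "cyc_words n = {w. length w = n \<and> cyc_admissible w}"

lemma successively_iff_nth:
  "successively P xs \<longleftrightarrow> (\<forall>j. Suc j < length xs \<longrightarrow> P (xs ! j) (xs ! Suc j))"
proof (induction P xs rule: successively.induct)
  case (3 P x y xs)
  then show ?case by (auto simp: nth_Cons less_Suc_eq_0_disj split: nat.splits)
qed auto

lemma admissible_nth: "admissible w \<longleftrightarrow> (\<forall>j. Suc j < length w \<longrightarrow> \<not> (w ! j \<and> w ! Suc j))"
proof -
  have "admissible w = successively (\<lambda>a b. \<not> (a \<and> b)) w"
    by (induction w rule: admissible.induct) auto
  then show ?thesis by (simp only: successively_iff_nth)
qed

lemma admissible_drop: "admissible w \<Longrightarrow> admissible (drop i w)"
  by (simp add: admissible_nth)

lemma finite_words_of_length: "finite {w :: bool list. length w = n}"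
  using finite_lists_length_eq[of "UNIV :: bool set" n] by simp

lemma finite_adm_words: "finite (adm_words n)"
  by (rule finite_subset[of _ "{w. length w = n}"]) (auto simp: adm_words_def finite_words_of_length)

lemma finite_cyc_words: "finite (cyc_words n)"
  by (rule finite_subset[of _ "{w. length w = n}"]) (auto simp: cyc_words_def finite_words_of_length)

lemma card_Un_images:
  assumes "inj f" "inj g" "f ` A \<inter> g ` B = {}" "finite A" "finite B"
  shows "card (f ` A \<union> g ` B) = card A + card B"
  using assms by (simp add: card_Un_disjoint card_image inj_on_subset)

lemma admissible_Cons_False [simp]: "admissible (False # w) \<longleftrightarrow> admissible w"
  by (cases w) simp_all

lemma admissible_snoc_False [simp]: "admissible (w @ [False]) \<longleftrightarrow> admissible w"
  by (induction w rule: admissible.induct) simp_all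

lemma adm_words_rec:
  "adm_words (Suc (Suc n)) = Cons False ` adm_words (Suc n) \<union> (\<lambda>u. True # False # u) ` adm_words n"
proof (intro equalityI subsetI)
  fix w assume "w \<in> adm_words (Suc (Suc n))"
  then obtain a b u where w: "w = a # b # u" "length u = n" "admissible (a # b # u)"
    by (auto simp: adm_words_def length_Suc_conv)
  then show "w \<in> Cons False ` adm_words (Suc n) \<union> (\<lambda>u. True # False # u) ` adm_words n"
    by (cases a) (auto simp: adm_words_def)
qed (auto simp: adm_words_def)

lemma card_adm_words: "card (adm_words n) = fib (Suc (Suc n))"
proof (induction n rule: fib.induct)
  case 1
  have "adm_words 0 = {[]}" by (auto simp: adm_words_def)
  then show ?case by simp
next
  case 2
  have "adm_words (Suc 0) = {[False], [True]}" by (auto simp: adm_words_def length_Suc_conv)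
  then show ?case by (simp add: numeral_eq_Suc)
next
  case (3 n)
  show ?case
    unfolding adm_words_rec using 3
    by (subst card_Un_images) (auto simp: inj_def finite_adm_words)
qed

lemma cyc_words_rec:
  "cyc_words (Suc (Suc (Suc n))) =
     Cons False ` adm_words (Suc (Suc n)) \<union> (\<lambda>u. True # False # u @ [False]) ` adm_words n"
proof (intro equalityI subsetI)
  fix w assume "w \<in> cyc_words (Suc (Suc (Suc n)))"
  then obtain a b u where w: "w = a # b # u" "length u = Suc n" "cyc_admissible w"
    by (auto simp: cyc_words_def length_Suc_conv)
  show "w \<in> Cons False ` adm_words (Suc (Suc n)) \<union> (\<lambda>u. True # False # u @ [False]) ` adm_words n"
  proof (cases a)
    case True
    obtain v c where u: "u = v @ [c]"
      using \<open>length u = Suc n\<close> by (metis length_Suc_conv_rev)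
    have "\<not> b" "\<not> c" "admissible (b # v @ [c])"
      using w True u by (auto simp: cyc_admissible_def)
    then have "w = True # False # v @ [False]" "v \<in> adm_words n"
      using w True u by (auto simp: adm_words_def)
    then show ?thesis by blast
  next
    case False
    then show ?thesis
      using w by (auto simp: cyc_admissible_def adm_words_def)
  qed
next
  fix w assume "w \<in> Cons False ` adm_words (Suc (Suc n)) \<union> (\<lambda>u. True # False # u @ [False]) ` adm_words n"
  then show "w \<in> cyc_words (Suc (Suc (Suc n)))"
  proof
    assume "w \<in> Cons False ` adm_words (Suc (Suc n))"
    then show ?thesis by (auto simp: cyc_words_def cyc_admissible_def adm_words_def)
  next
    assume "w \<in> (\<lambda>u. True # False # u @ [False]) ` adm_words n"
    then obtain u where "w = True # False # u @ [False]" "u \<in> adm_words n" by blast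
    then show ?thesis
      by (simp add: cyc_words_def cyc_admissible_def adm_words_def flip: append_Cons)
  qed
qed

lemma lucas_fib: "lucas (Suc n) = int (fib n + fib (Suc (Suc n)))"
  by (induction n rule: fib.induct) simp_all

lemma card_cyc_words:
  assumes "m \<ge> 1"
  shows "int (card (cyc_words m)) = lucas m"
proof -
  have "m = 1 \<or> m = 2 \<or> (\<exists>n. m = Suc (Suc (Suc n)))"
    using assms by presburger
  then consider "m = 1" | "m = 2" | n where "m = Suc (Suc (Suc n))"
    by blast
  then show ?thesis
  proof cases
    case 1
    have "cyc_words 1 = {[False]}"
      by (auto simp: cyc_words_def cyc_admissible_def length_Suc_conv)
    then show ?thesis using 1 by simp
  next
    case 2
    have "cyc_words 2 = {[False, False], [False, True], [True, False]}"
      by (auto simp: cyc_words_def cyc_admissible_def length_Suc_conv numeral_eq_Suc)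
    then show ?thesis using 2 by (simp add: numeral_eq_Suc)
  next
    case (3 n)
    have "card (cyc_words m) = fib (Suc (Suc (Suc (Suc n)))) + fib (Suc (Suc n))"
      unfolding 3 cyc_words_rec
      by (subst card_Un_images) (auto simp: inj_def finite_adm_words card_adm_words)
    then show ?thesis using 3 lucas_fib[of "Suc (Suc n)"] by simp
  qed
qed


section \<open>Inverse branches and the periodic point of a word\<close>

fun inv_branch :: "bool \<Rightarrow> real \<Rightarrow> real" where
  "inv_branch False y = (5 - y) / 2"
| "inv_branch True y = y + 1"

definition branch_dom :: "bool \<Rightarrow> real set" where
  "branch_dom b = (if b then {1..2} else {1..3})"

definition branch_img :: "bool \<Rightarrow> real set" where
  "branch_img b = (if b then {2..3} else {1..2})"

lemma branch_dom_sub: "branch_dom b \<subseteq> {1..3}"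
  by (auto simp: branch_dom_def)

lemma inv_branch_img: "y \<in> branch_dom b \<Longrightarrow> inv_branch b y \<in> branch_img b"
  by (cases b) (auto simp: branch_dom_def branch_img_def)

lemma fmap_inv_branch: "y \<in> branch_dom b \<Longrightarrow> fmap (inv_branch b y) = y"
  by (cases b) (auto simp: branch_dom_def fmap_def field_simps)

lemma inv_branch_fmap: "inv_branch (2 < y) (fmap y) = y"
  by (auto simp: fmap_def)

lemma branch_img_sub_dom: "\<not> (a \<and> b) \<Longrightarrow> branch_img b \<subseteq> branch_dom a"
  by (auto simp: branch_dom_def branch_img_def)

text \<open>The composition of the inverse branches along a word, the first letter applied
  last; it is affine with slope a product of factors 1 and -1/2.\<close>
fun pullback :: "bool list \<Rightarrow> real \<Rightarrow> real" where
  "pullback [] y = y"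
| "pullback (b # w) y = inv_branch b (pullback w y)"

fun slope :: "bool list \<Rightarrow> real" where
  "slope [] = 1"
| "slope (b # w) = (if b then 1 else -1/2) * slope w"

lemma pullback_affine: "pullback w y = slope w * y + pullback w 0"
proof (induction w)
  case (Cons b w)
  then show ?case by (cases b) (simp_all add: field_simps)
qed simp

lemma abs_slope_le_1: "\<bar>slope w\<bar> \<le> 1"
  by (induction w) (auto simp: abs_mult)

lemma abs_slope_le_half: "False \<in> set w \<Longrightarrow> \<bar>slope w\<bar> \<le> 1/2"
proof (induction w)
  case (Cons b w)
  then show ?case using abs_slope_le_1[of w] by (cases b) (auto simp: abs_mult)
qed simp

text \<open>The fixed point of the affine map pullback w (unique when its slope is not 1).\<close>
definition fixpt :: "bool list \<Rightarrow> real" where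
  "fixpt w = pullback w 0 / (1 - slope w)"

lemma pullback_fixed_iff:
  assumes "slope w \<noteq> 1"
  shows "pullback w x = x \<longleftrightarrow> x = fixpt w"
proof -
  have "1 - slope w \<noteq> 0" using assms by simp
  then show ?thesis
    using pullback_affine[of w x] by (auto simp: fixpt_def field_simps)
qed

text \<open>A nonempty cyclically admissible word contains a lower letter, so its pullback is
  a contraction.\<close>
lemma cyc_admissible_has_False: "cyc_admissible w \<Longrightarrow> w \<noteq> [] \<Longrightarrow> False \<in> set w"
  by (metis (full_types) cyc_admissible_def hd_in_set last_in_set)

lemma slope_cyc_lt_1:
  assumes "cyc_admissible w" "w \<noteq> []"
  shows "slope w < 1"
proof -
  have "\<bar>slope w\<bar> \<le> 1/2"
    using assms by (intro abs_slope_le_half cyc_admissible_has_False)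
  then show ?thesis by (simp add: abs_le_iff)
qed

lemma pullback_img:
  "admissible w \<Longrightarrow> w \<noteq> [] \<Longrightarrow> y \<in> branch_dom (last w) \<Longrightarrow> pullback w y \<in> branch_img (hd w)"
proof (induction w rule: admissible.induct)
  case (1 a b w)
  then have "pullback (b # w) y \<in> branch_dom a"
    using branch_img_sub_dom[of a b] by auto
  then show ?case by (simp add: inv_branch_img)
qed (auto simp: inv_branch_img)

lemma affine_fixpoint_in_interval:
  fixes a c p q :: real
  assumes "a < 1" "p \<le> a * p + c" "a * q + c \<le> q"
  shows "c / (1 - a) \<in> {p..q}"
  using assms by (simp add: pos_le_divide_eq pos_divide_le_eq algebra_simps)

lemma fixpt_in_dom:
  assumes w: "cyc_admissible w" "w \<noteq> []"
  shows "fixpt w \<in> branch_dom (last w)"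
proof -
  define q :: real where "q = (if last w then 2 else 3)"
  have dom: "branch_dom (last w) = {1..q}" and "1 \<le> q"
    by (simp_all add: branch_dom_def q_def)
  have "pullback w y \<in> {1..q}" if "y \<in> {1..q}" for y
  proof -
    have "pullback w y \<in> branch_img (hd w)"
      using w that dom by (intro pullback_img) (auto simp: cyc_admissible_def)
    also have "\<dots> \<subseteq> branch_dom (last w)"
      using w by (intro branch_img_sub_dom) (auto simp: cyc_admissible_def)
    finally show ?thesis using dom by simp
  qed
  from this[of 1] this[of q] \<open>1 \<le> q\<close>
  have "1 \<le> slope w * 1 + pullback w 0" "slope w * q + pullback w 0 \<le> q"
    by (auto simp: pullback_affine[of w 1] pullback_affine[of w q])
  then show ?thesis
    unfolding fixpt_def dom using slope_cyc_lt_1[OF w] affine_fixpoint_in_interval by blast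
qed


section \<open>Orbits of the periodic points of words\<close>

lemma pullback_drop:
  assumes adm: "admissible w" and i: "i < length w" and y: "y \<in> branch_dom (last w)"
  shows "pullback (drop i w) y \<in> branch_img (w ! i)"
    and "fmap (pullback (drop i w) y) = pullback (drop (Suc i) w) y"
proof -
  have next_dom: "pullback (drop (Suc i) w) y \<in> branch_dom (w ! i)"
  proof (cases "Suc i = length w")
    case True
    then have "w \<noteq> []" "length w - 1 = i" by auto
    then show ?thesis using y by (simp add: last_conv_nth)
  next
    case False
    then have si: "Suc i < length w" using i by simp
    have "pullback (drop (Suc i) w) y \<in> branch_img (w ! Suc i)"
      using pullback_img[OF admissible_drop[OF adm], of "Suc i"] si y by (simp add: hd_drop_conv_nth)
    also have "\<dots> \<subseteq> branch_dom (w ! i)"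
      using adm si by (intro branch_img_sub_dom) (simp add: admissible_nth)
    finally show ?thesis .
  qed
  have split: "pullback (drop i w) y = inv_branch (w ! i) (pullback (drop (Suc i) w) y)"
    using i by (simp add: Cons_nth_drop_Suc[symmetric])
  show "pullback (drop i w) y \<in> branch_img (w ! i)"
    unfolding split using next_dom by (rule inv_branch_img)
  show "fmap (pullback (drop i w) y) = pullback (drop (Suc i) w) y"
    unfolding split using next_dom by (rule fmap_inv_branch)
qed

lemma funpow_pullback:
  assumes "admissible w" "y \<in> branch_dom (last w)"
  shows "i \<le> length w \<Longrightarrow> (fmap ^^ i) (pullback w y) = pullback (drop i w) y"
proof (induction i)
  case (Suc i)
  then show ?case using pullback_drop(2)[OF assms(1) _ assms(2), of i] by simp
qed simp

lemma fixpt_periodic: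
  assumes "w \<in> cyc_words m" "m \<ge> 1"
  shows "(fmap ^^ m) (fixpt w) = fixpt w" and "fixpt w \<in> {1..3}"
    and "i < m \<Longrightarrow> (fmap ^^ i) (fixpt w) \<in> branch_img (w ! i)"
proof -
  have w: "cyc_admissible w" "length w = m" "w \<noteq> []"
    using assms by (auto simp: cyc_words_def)
  have adm: "admissible w" using w by (simp add: cyc_admissible_def)
  have dom: "fixpt w \<in> branch_dom (last w)" by (rule fixpt_in_dom[OF w(1,3)])
  have fixed: "pullback w (fixpt w) = fixpt w"
    using pullback_fixed_iff slope_cyc_lt_1[OF w(1,3)] by simp
  have iterate: "(fmap ^^ i) (fixpt w) = pullback (drop i w) (fixpt w)" if "i \<le> m" for i
    using funpow_pullback[OF adm dom, of i] that w(2) fixed by simp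
  show "(fmap ^^ m) (fixpt w) = fixpt w" using iterate[of m] w(2) by simp
  show "fixpt w \<in> {1..3}" using dom branch_dom_sub by blast
  show "(fmap ^^ i) (fixpt w) \<in> branch_img (w ! i)" if "i < m"
    using iterate[of i] pullback_drop(1)[OF adm _ dom, of i] that w(2) by simp
qed


section \<open>Itineraries and the number of fixed points of fmap^m\<close>

definition itinerary :: "real \<Rightarrow> nat \<Rightarrow> bool list" where
  "itinerary x m = map (\<lambda>i. 2 < (fmap ^^ i) x) [0..<m]"

lemma funpow_in_interval: "x \<in> {1..3} \<Longrightarrow> (fmap ^^ i) x \<in> {1..3}"
  by (induction i) (auto simp: fmap_def)

text \<open>On [1,3] the upper branch maps into [1,2], so an upper label is never followed by one.\<close>
lemma upper_then_lower: "y \<in> {1..3} \<Longrightarrow> 2 < y \<Longrightarrow> \<not> 2 < fmap y"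
  by (auto simp: fmap_def)

lemma itinerary_cyc_words:
  assumes x: "x \<in> {1..3}" and per: "(fmap ^^ m) x = x" and m: "m \<ge> 1"
  shows "itinerary x m \<in> cyc_words m"
proof -
  have no_double: "\<not> (2 < (fmap ^^ j) x \<and> 2 < fmap ((fmap ^^ j) x))" for j
    using upper_then_lower[OF funpow_in_interval[OF x, of j]] by auto
  have "admissible (itinerary x m)"
    by (auto simp: admissible_nth itinerary_def no_double)
  moreover have "\<not> (last (itinerary x m) \<and> hd (itinerary x m))"
  proof -
    have "last (itinerary x m) = (2 < (fmap ^^ (m - 1)) x)" "hd (itinerary x m) = (2 < x)"
      using m by (simp_all add: itinerary_def last_map hd_map)
    moreover have "fmap ((fmap ^^ (m - 1)) x) = x"
      using per m funpow.simps(2)[of "m - 1" fmap] by (simp del: funpow.simps)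
    ultimately show ?thesis using no_double[of "m - 1"] by auto
  qed
  ultimately show ?thesis by (simp add: cyc_words_def cyc_admissible_def itinerary_def)
qed

lemma pullback_itinerary:
  "i \<le> m \<Longrightarrow> pullback (drop i (itinerary x m)) ((fmap ^^ m) x) = (fmap ^^ i) x"
proof (induction i rule: inc_induct)
  case base
  then show ?case by (simp add: itinerary_def)
next
  case (step i)
  have "drop i (itinerary x m) = (2 < (fmap ^^ i) x) # drop (Suc i) (itinerary x m)"
    using step.hyps by (simp add: itinerary_def Cons_nth_drop_Suc[symmetric])
  then show ?case using step.IH inv_branch_fmap[of "(fmap ^^ i) x"] by simp
qed

lemma fixpt_itinerary:
  assumes x: "x \<in> {1..3}" and per: "(fmap ^^ m) x = x" and m: "m \<ge> 1"
  shows "fixpt (itinerary x m) = x"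
proof -
  have "itinerary x m \<in> cyc_words m" by (rule itinerary_cyc_words[OF assms])
  then have "slope (itinerary x m) \<noteq> 1"
    using slope_cyc_lt_1 m by (fastforce simp: cyc_words_def)
  moreover have "pullback (itinerary x m) x = x"
    using pullback_itinerary[of 0 m x] per by simp
  ultimately show ?thesis using pullback_fixed_iff by simp
qed

lemma cyc_admissible_nth:
  assumes "cyc_admissible w" "w \<noteq> []"
  shows "\<not> (w ! (k mod length w) \<and> w ! (Suc k mod length w))"
proof (cases "Suc (k mod length w) < length w")
  case True
  then have "Suc k mod length w = Suc (k mod length w)" by (simp add: mod_Suc)
  then show ?thesis using assms True by (simp add: cyc_admissible_def admissible_nth)
next
  case False
  have "k mod length w < length w" using assms(2) by simp
  then have "k mod length w = length w - 1" "Suc k mod length w = 0"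
    using False by (auto simp: mod_Suc)
  then show ?thesis using assms by (simp add: cyc_admissible_def last_conv_nth hd_conv_nth)
qed

text \<open>The point 2 lies on the 3-cycle 2, 1, 3.  Along an orbit labelled periodically
  (every point in the image of the branch of its label, no two consecutive upper labels)
  the point 3 carries an upper label, so every later visit of 2 carries a lower one;
  by periodicity 2 is never labelled upper.\<close>
lemma upper_label_not_two:
  fixes Y :: "nat \<Rightarrow> real" and W :: "nat \<Rightarrow> bool"
  assumes orbit: "\<And>k. Y (Suc k) = fmap (Y k)"
    and labels: "\<And>k. Y k \<in> branch_img (W k)"
    and no_double: "\<And>k. W k \<Longrightarrow> \<not> W (Suc k)"
    and periodic: "\<And>k. W (k + m) = W k" and "0 < m"
    and upper: "W k"
  shows "Y k \<noteq> 2"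
proof
  assume two: "Y k = 2"
  have cycle: "Y (j + 3) = 2 \<and> \<not> W (j + 3)" if "Y j = 2" for j
  proof -
    have "Y (Suc (Suc j)) = 3" "Y (j + 3) = 2"
      using that orbit by (simp_all add: fmap_def numeral_3_eq_3)
    then have "W (Suc (Suc j))"
      using labels[of "Suc (Suc j)"] by (auto simp: branch_img_def split: if_splits)
    then show ?thesis using no_double \<open>Y (j + 3) = 2\<close> by (simp add: numeral_3_eq_3)
  qed
  have returns: "Y (k + 3 * n) = 2" for n
  proof (induction n)
    case (Suc n)
    then show ?case using cycle[OF Suc.IH] by (simp add: ac_simps)
  qed (simp add: two)
  have "k + 3 * m = k + 3 * (m - 1) + 3" using \<open>0 < m\<close> by simp
  then have "\<not> W (k + 3 * m)" using cycle[OF returns[of "m - 1"]] by metis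
  moreover have "W (k + n * m) = W k" for n
  proof (induction n)
    case (Suc n)
    have "k + Suc n * m = (k + n * m) + m" by simp
    then show ?case using periodic Suc.IH by metis
  qed simp
  ultimately show False using upper by metis
qed

text \<open>Conversely, a cyclically admissible word is the itinerary of its fixed point: the
  only ambiguous point 2 never carries an upper label.\<close>
lemma itinerary_fixpt:
  assumes w: "w \<in> cyc_words m" and m: "m \<ge> 1"
  shows "itinerary (fixpt w) m = w"
proof -
  have len: "length w = m" and cyc: "cyc_admissible w" using w by (auto simp: cyc_words_def)
  have ne: "w \<noteq> []" using len m by auto
  define Y where "Y k = (fmap ^^ k) (fixpt w)" for k
  define W where "W k = w ! (k mod m)" for k
  have Y_mod: "Y k = Y (k mod m)" for k
    unfolding Y_def using funpow_mod_eq[OF fixpt_periodic(1)[OF w m]] by simp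
  have labels: "Y k \<in> branch_img (W k)" for k
  proof -
    have "Y (k mod m) \<in> branch_img (w ! (k mod m))"
      unfolding Y_def using fixpt_periodic(3)[OF w m] m by simp
    then show ?thesis using Y_mod[of k] by (simp add: W_def)
  qed
  have no_double: "W k \<Longrightarrow> \<not> W (Suc k)" for k
    unfolding W_def using cyc_admissible_nth[OF cyc ne, of k] len by auto
  have not_two: "W k \<Longrightarrow> Y k \<noteq> 2" for k
    by (rule upper_label_not_two[of Y W m]) (use labels no_double m in \<open>auto simp: Y_def W_def\<close>)
  have "2 < Y i \<longleftrightarrow> w ! i" if "i < m" for i
    using labels[of i] not_two[of i] that by (auto simp: W_def branch_img_def split: if_splits)
  then show ?thesis by (intro nth_equalityI) (auto simp: itinerary_def len Y_def)
qed

lemma itinerary_bij: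
  assumes "m \<ge> 1"
  shows "bij_betw (\<lambda>x. itinerary x m) {x \<in> {1..3::real}. (fmap ^^ m) x = x} (cyc_words m)"
proof (rule bij_betw_byWitness[where f' = fixpt])
  show "fixpt ` cyc_words m \<subseteq> {x \<in> {1..3}. (fmap ^^ m) x = x}"
    using fixpt_periodic(1,2) assms by blast
qed (use assms fixpt_itinerary itinerary_fixpt itinerary_cyc_words in auto)

theorem card_fixed_points:
  assumes "m \<ge> 1"
  shows "int (card {x \<in> {1..3::real}. (fmap ^^ m) x = x}) = lucas m"
  using bij_betw_same_card[OF itinerary_bij[OF assms]] card_cyc_words[OF assms] by simp

lemma finite_fixed_points: "m \<ge> 1 \<Longrightarrow> finite {x \<in> {1..3::real}. (fmap ^^ m) x = x}"
  using bij_betw_finite[OF itinerary_bij] finite_cyc_words by blast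


section \<open>Minimal periods and orbits of an arbitrary map\<close>

definition min_period :: "(real \<Rightarrow> real) \<Rightarrow> real \<Rightarrow> nat" where
  "min_period g x = (LEAST k. 0 < k \<and> (g ^^ k) x = x)"

lemma funpow_multiple_fixed: "(g ^^ n) x = x \<Longrightarrow> (g ^^ (q * n)) x = x"
  using funpow_mod_eq[where f = g and n = n and x = x and m = "q * n"] by simp

lemma min_period:
  assumes "(g ^^ n) x = x" "0 < n"
  shows "0 < min_period g x" and "(g ^^ min_period g x) x = x"
    and "\<And>k. 0 < k \<Longrightarrow> k < min_period g x \<Longrightarrow> (g ^^ k) x \<noteq> x"
proof -
  have "0 < min_period g x \<and> (g ^^ min_period g x) x = x"
    unfolding min_period_def by (rule LeastI[of _ n]) (use assms in auto)
  then show "0 < min_period g x" "(g ^^ min_period g x) x = x" by auto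
  show "(g ^^ k) x \<noteq> x" if "0 < k" "k < min_period g x" for k
    using not_less_Least[of k "\<lambda>k. 0 < k \<and> (g ^^ k) x = x"] that
    unfolding min_period_def by blast
qed

lemma min_period_dvd:
  assumes "(g ^^ n) x = x" "0 < n"
  shows "min_period g x dvd n"
proof -
  let ?p = "min_period g x"
  have "(g ^^ (n mod ?p)) x = x"
    using funpow_mod_eq[OF min_period(2)[OF assms], of n] assms(1) by simp
  moreover have "n mod ?p < ?p" using min_period(1)[OF assms] by simp
  ultimately have "n mod ?p = 0" using min_period(3)[OF assms, of "n mod ?p"] by auto
  then show ?thesis by (simp add: dvd_eq_mod_eq_0)
qed

lemma orbit_periodic:
  assumes "(g ^^ n) x = x" "0 < n"
  shows "finite (orbit g x)" and "card (orbit g x) = min_period g x"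
proof -
  let ?p = "min_period g x"
  have p: "0 < ?p" "(g ^^ ?p) x = x" using min_period(1,2)[OF assms] by simp_all
  have image: "orbit g x = (\<lambda>k. (g ^^ k) x) ` {..<?p}"
  proof
    show "orbit g x \<subseteq> (\<lambda>k. (g ^^ k) x) ` {..<?p}"
    proof
      fix y assume "y \<in> orbit g x"
      then obtain k where "y = (g ^^ k) x" by (auto simp: orbit_def)
      then have "y = (g ^^ (k mod ?p)) x" using funpow_mod_eq[OF p(2)] by simp
      then show "y \<in> (\<lambda>k. (g ^^ k) x) ` {..<?p}" using p(1) by auto
    qed
    show "(\<lambda>k. (g ^^ k) x) ` {..<?p} \<subseteq> orbit g x" unfolding orbit_def by blast
  qed
  have distinct: "(g ^^ i) x \<noteq> (g ^^ j) x" if "i < j" "j < ?p" for i j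
  proof
    assume eq: "(g ^^ i) x = (g ^^ j) x"
    have "(g ^^ (?p - j + i)) x = (g ^^ (?p - j)) ((g ^^ j) x)"
      by (simp add: funpow_add eq)
    also have "\<dots> = (g ^^ (?p - j + j)) x" by (simp add: funpow_add)
    also have "\<dots> = x" using that p(2) by simp
    finally have "(g ^^ (?p - j + i)) x = x" .
    moreover have "(g ^^ (?p - j + i)) x \<noteq> x"
      by (rule min_period(3)[OF assms]) (use that in auto)
    ultimately show False by contradiction
  qed
  have "inj_on (\<lambda>k. (g ^^ k) x) {..<?p}"
  proof (rule inj_onI)
    fix i j assume "i \<in> {..<?p}" "j \<in> {..<?p}" "(g ^^ i) x = (g ^^ j) x"
    then show "i = j" using distinct[of i j] distinct[of j i] by (cases i j rule: linorder_cases) auto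
  qed
  then show "finite (orbit g x)" "card (orbit g x) = ?p"
    by (simp_all add: image card_image)
qed

lemma has_min_period_iff:
  assumes "(g ^^ n) x = x" "0 < n"
  shows "has_min_period g d x \<longleftrightarrow> d = min_period g x"
  using orbit_periodic[OF assms] min_period(2)[OF assms] unfolding has_min_period_def by auto

lemma orbit_self: "x \<in> orbit g x"
  unfolding orbit_def by (auto intro: exI[of _ 0])

lemma has_min_period_pos:
  assumes "has_min_period g d x"
  shows "0 < d" and "(g ^^ d) x = x"
proof -
  show "0 < d"
    using assms orbit_self[of x g] unfolding has_min_period_def by (auto intro: Nat.gr0I)
  show "(g ^^ d) x = x" using assms unfolding has_min_period_def by simp
qed

lemma orbit_funpow_subset: "orbit g ((g ^^ k) x) \<subseteq> orbit g x"
proof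
  fix y assume "y \<in> orbit g ((g ^^ k) x)"
  then obtain j where "y = (g ^^ j) ((g ^^ k) x)" by (auto simp: orbit_def)
  then have "y = (g ^^ (j + k)) x" by (simp add: funpow_add)
  then show "y \<in> orbit g x" by (auto simp: orbit_def)
qed

lemma has_min_period_orbit:
  assumes x: "has_min_period g m x" and y: "y \<in> orbit g x"
  shows "orbit g y = orbit g x" and "has_min_period g m y"
proof -
  have per: "(g ^^ m) x = x" "0 < m" using has_min_period_pos[OF x] by auto
  obtain k where k: "y = (g ^^ k) x" using y by (auto simp: orbit_def)
  have "orbit g y \<subseteq> orbit g x"
    unfolding k by (rule orbit_funpow_subset)
  moreover have "orbit g x \<subseteq> orbit g y"
  proof -
    have km: "k * m - k + k = k * m" using per(2) by (cases m) auto
    have "(g ^^ (k * m - k)) y = (g ^^ (k * m - k + k)) x"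
      by (simp add: k funpow_add)
    then have "(g ^^ (k * m - k)) y = x"
      using km funpow_multiple_fixed[OF per(1), of k] by simp
    then show ?thesis using orbit_funpow_subset[of g "k * m - k" y] by simp
  qed
  ultimately show eq: "orbit g y = orbit g x" by (rule subset_antisym)
  have "(g ^^ m) y = (g ^^ k) ((g ^^ m) x)"
    unfolding k by (metis add.commute comp_apply funpow_add)
  then have "(g ^^ m) y = y" using per(1) k by simp
  then show "has_min_period g m y" using x eq by (simp add: has_min_period_def)
qed

lemma fixed_points_decomp:
  assumes "0 < m"
  shows "{x \<in> S. (g ^^ m) x = x} = (\<Union>d \<in> {d. d dvd m}. {x \<in> S. has_min_period g d x})"
proof (intro equalityI subsetI)
  fix x assume "x \<in> {x \<in> S. (g ^^ m) x = x}"
  then have x: "x \<in> S" "(g ^^ m) x = x" by auto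
  have "has_min_period g (min_period g x) x" using has_min_period_iff[OF x(2) assms] by simp
  moreover have "min_period g x dvd m" by (rule min_period_dvd[OF x(2) assms])
  ultimately show "x \<in> (\<Union>d \<in> {d. d dvd m}. {x \<in> S. has_min_period g d x})"
    using x(1) by auto
next
  fix x assume "x \<in> (\<Union>d \<in> {d. d dvd m}. {x \<in> S. has_min_period g d x})"
  then obtain d where d: "d dvd m" "x \<in> S" "has_min_period g d x" by auto
  obtain q where "m = d * q" using d(1) by (rule dvdE)
  then have q: "m = q * d" by (simp add: mult.commute)
  have "(g ^^ m) x = x"
    unfolding q by (rule funpow_multiple_fixed[OF has_min_period_pos(2)[OF d(3)]])
  then show "x \<in> {x \<in> S. (g ^^ m) x = x}" using d(2) by simp
qed

lemma card_fixed_points_divisor_sum: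
  assumes "0 < m" and fin: "finite {x \<in> S. (g ^^ m) x = x}"
  shows "card {x \<in> S. (g ^^ m) x = x} = (\<Sum>d | d dvd m. card {x \<in> S. has_min_period g d x})"
  unfolding fixed_points_decomp[OF assms(1)]
proof (rule card_UN_disjoint)
  show "finite {d. d dvd m}" using assms(1) by simp
  show "\<forall>d\<in>{d. d dvd m}. finite {x \<in> S. has_min_period g d x}"
  proof
    fix d assume "d \<in> {d. d dvd m}"
    then have "{x \<in> S. has_min_period g d x} \<subseteq> {x \<in> S. (g ^^ m) x = x}"
      unfolding fixed_points_decomp[OF assms(1)] by auto
    then show "finite {x \<in> S. has_min_period g d x}" using fin by (rule finite_subset)
  qed
  show "\<forall>d\<in>{d. d dvd m}. \<forall>e\<in>{d. d dvd m}. d \<noteq> e \<longrightarrow>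
      {x \<in> S. has_min_period g d x} \<inter> {x \<in> S. has_min_period g e x} = {}"
    by (auto simp: has_min_period_def)
qed

lemma card_orbits:
  assumes inv: "\<And>x. x \<in> S \<Longrightarrow> g x \<in> S" and fin: "finite {x \<in> S. has_min_period g m x}"
  shows "m * card {orbit g x | x. x \<in> S \<and> has_min_period g m x} = card {x \<in> S. has_min_period g m x}"
proof -
  let ?P = "{x \<in> S. has_min_period g m x}"
  let ?O = "{orbit g x | x. x \<in> S \<and> has_min_period g m x}"
  have orbit_in_S: "orbit g x \<subseteq> S" if "x \<in> S" for x
  proof -
    have "(g ^^ k) x \<in> S" for k by (induction k) (use that inv in auto)
    then show ?thesis by (auto simp: orbit_def)
  qed
  have union: "\<Union>?O = ?P"
  proof (intro equalityI subsetI)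
    fix y assume "y \<in> \<Union>?O"
    then obtain x where "x \<in> S" "has_min_period g m x" "y \<in> orbit g x" by auto
    then show "y \<in> ?P" using orbit_in_S has_min_period_orbit(2) by auto
  next
    fix x assume "x \<in> ?P"
    then show "x \<in> \<Union>?O" using orbit_self[of x g] by auto
  qed
  have "m * card ?O = card (\<Union>?O)"
  proof (rule card_partition)
    show "finite ?O" using fin by (simp add: setcompr_eq_image)
    show "finite (\<Union>?O)" using union fin by simp
    show "card c = m" if "c \<in> ?O" for c using that by (auto simp: has_min_period_def)
    show "c1 \<inter> c2 = {}" if c: "c1 \<in> ?O" "c2 \<in> ?O" "c1 \<noteq> c2" for c1 c2
    proof (rule ccontr)
      obtain x1 x2 where x: "c1 = orbit g x1" "c2 = orbit g x2"
        "has_min_period g m x1" "has_min_period g m x2"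
        using c(1,2) by auto
      assume "c1 \<inter> c2 \<noteq> {}"
      then obtain z where z: "z \<in> orbit g x1" "z \<in> orbit g x2" using x(1,2) by auto
      have "c1 = orbit g z" using has_min_period_orbit(1)[OF x(3) z(1)] x(1) by simp
      moreover have "c2 = orbit g z" using has_min_period_orbit(1)[OF x(4) z(2)] x(2) by simp
      ultimately show False using c(3) by simp
    qed
  qed
  then show ?thesis using union by simp
qed


section \<open>Points of minimal period of fmap and their orbits\<close>

definition prim_count :: "nat \<Rightarrow> int" where
  "prim_count d = int (card {x \<in> {1..3::real}. has_min_period fmap d x})"

lemma finite_min_period_points: "finite {x \<in> {1..3::real}. has_min_period fmap d x}"
proof (cases "d = 0")
  case True
  then have "\<not> has_min_period fmap d x" for x
    using has_min_period_pos(1)[of fmap d x] by auto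
  then show ?thesis by simp
next
  case False
  have "{x \<in> {1..3::real}. has_min_period fmap d x} \<subseteq> {x \<in> {1..3}. (fmap ^^ d) x = x}"
  proof
    fix x assume "x \<in> {x \<in> {1..3::real}. has_min_period fmap d x}"
    then show "x \<in> {x \<in> {1..3}. (fmap ^^ d) x = x}" using has_min_period_pos(2)[of fmap d x] by simp
  qed
  moreover have "finite {x \<in> {1..3::real}. (fmap ^^ d) x = x}"
    using finite_fixed_points[of d] False by simp
  ultimately show ?thesis by (rule finite_subset)
qed

lemma lucas_prim_count_sum:
  assumes "m \<ge> 1"
  shows "lucas m = (\<Sum>d | d dvd m. prim_count d)"
  using card_fixed_points[OF assms] card_fixed_points_divisor_sum[OF _ finite_fixed_points[OF assms]]
    assms by (simp add: prim_count_def)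

theorem card_orbits_fmap:
  assumes "m \<ge> 1"
  shows "real (card {orbit fmap x | x. x \<in> {1..3::real} \<and> has_min_period fmap m x})
           = real_of_int (prim_count m) / real m"
proof -
  have "m * card {orbit fmap x | x. x \<in> {1..3::real} \<and> has_min_period fmap m x}
          = card {x \<in> {1..3::real}. has_min_period fmap m x}"
    by (rule card_orbits[OF _ finite_min_period_points]) (auto simp: fmap_def)
  then show ?thesis using assms by (simp add: prim_count_def field_simps flip: of_nat_mult)
qed


section \<open>Inversion of divisor sums over squarefree divisors\<close>

lemma prod_primes_dvd:
  fixes n :: nat
  shows "finite S \<Longrightarrow> \<forall>q\<in>S. prime q \<and> q dvd n \<Longrightarrow> \<Prod>S dvd n"
proof (induction S rule: finite_induct)
  case (insert q S)
  have "coprime q (\<Prod>S)"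
  proof (rule prod_coprime_right)
    fix r assume "r \<in> S"
    then have "prime r" "r \<noteq> q" using insert by auto
    then show "coprime q r" using insert.prems primes_coprime by auto
  qed
  then show ?case using insert by (simp add: divides_mult)
qed simp

lemma div_dvd_of_dvd: "(d::nat) dvd m \<Longrightarrow> m div d dvd m"
  by (metis dvd_div_mult_self dvd_triv_left)

lemma subset_prime_factors_iff:
  fixes k m :: nat
  assumes "k \<noteq> 0" "S \<subseteq> prime_factors m"
  shows "S \<subseteq> prime_factors k \<longleftrightarrow> \<Prod>S dvd k"
proof
  have fin: "finite S" using assms(2) finite_subset by blast
  show "S \<subseteq> prime_factors k \<Longrightarrow> \<Prod>S dvd k"
    using fin by (rule prod_primes_dvd) auto
  show "S \<subseteq> prime_factors k" if "\<Prod>S dvd k"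
  proof
    fix q assume q: "q \<in> S"
    then have "q dvd k" using dvd_prodI[OF fin q, of "\<lambda>x. x"] that by (auto intro: dvd_trans)
    then show "q \<in> prime_factors k" using q assms by (auto intro: prime_factorsI)
  qed
qed

lemma sum_Pow_alternating:
  assumes "finite A"
  shows "(\<Sum>S\<in>Pow A. (-1::int) ^ card S) = (if A = {} then 1 else 0)"
proof (cases "A = {}")
  case False
  then have "card {T. T \<subseteq> A \<and> {} \<subseteq> T \<and> even (card T)} = card {T. T \<subseteq> A \<and> {} \<subseteq> T \<and> odd (card T)}"
    using card_subsupersets_even_odd[OF assms, of "{}"] by auto
  then have "(\<Sum>S\<in>Pow A. (-1::int) ^ card S) = 0"
    using assms by (intro sum_alternating_cancels) auto
  then show ?thesis using False by simp
qed simp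

lemma prime_factor_sets_dividing:
  fixes d m :: nat
  assumes "d dvd m" "m \<noteq> 0"
  shows "{S \<in> Pow (prime_factors m). d dvd m div \<Prod>S} = Pow (prime_factors (m div d))"
proof -
  have d0: "d \<noteq> 0" and md0: "m div d \<noteq> 0" using assms by auto
  have sub: "prime_factors (m div d) \<subseteq> prime_factors m"
    using assms by (auto simp: in_prime_factors_iff intro: dvd_trans[OF _ div_dvd_of_dvd])
  have "d dvd m div \<Prod>S \<longleftrightarrow> \<Prod>S dvd m div d" if S: "S \<subseteq> prime_factors m" for S
  proof -
    have P: "\<Prod>S dvd m" using subset_prime_factors_iff[OF assms(2) S] S by simp
    then have "\<Prod>S \<noteq> 0" using assms(2) by auto
    have "d dvd m div \<Prod>S \<longleftrightarrow> d * \<Prod>S dvd m" by (simp add: dvd_div_iff_mult P \<open>\<Prod>S \<noteq> 0\<close>)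
    also have "\<dots> \<longleftrightarrow> \<Prod>S dvd m div d" by (simp add: dvd_div_iff_mult d0 assms(1) mult.commute)
    finally show ?thesis .
  qed
  then have "{S \<in> Pow (prime_factors m). d dvd m div \<Prod>S}
      = {S \<in> Pow (prime_factors m). S \<subseteq> prime_factors (m div d)}"
    using subset_prime_factors_iff[OF md0] by auto
  also have "\<dots> = Pow (prime_factors (m div d))" using sub by auto
  finally show ?thesis .
qed

theorem Phi_divisor_sum_inversion:
  fixes L p :: "nat \<Rightarrow> int"
  assumes L: "\<And>n. n \<ge> 1 \<Longrightarrow> L n = (\<Sum>d | d dvd n. p d)" and m: "m \<ge> 1"
  shows "Phi m L = p m"
proof -
  let ?P = "prime_factors m" and ?D = "{d. d dvd m}"
  have m0: "m \<noteq> 0" using m by simp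
  have S_dvd: "\<Prod>S dvd m" if "S \<in> Pow ?P" for S
    using subset_prime_factors_iff[OF m0, of S m] that by auto
  have S_div: "m div \<Prod>S \<ge> 1" if "S \<in> Pow ?P" for S
    using dvd_div_eq_0_iff[OF S_dvd[OF that]] m0 by simp
  have "Phi m L = (\<Sum>S\<in>Pow ?P. \<Sum>d\<in>{d \<in> ?D. d dvd m div \<Prod>S}. (-1) ^ card S * p d)"
    unfolding Phi_def
  proof (rule sum.cong[OF refl])
    fix S assume S: "S \<in> Pow ?P"
    have "{d \<in> ?D. d dvd m div \<Prod>S} = {d. d dvd m div \<Prod>S}"
      using S_dvd[OF S] by (auto intro: dvd_trans[OF _ div_dvd_of_dvd])
    then show "(-1) ^ card S * L (m div \<Prod>S) = (\<Sum>d\<in>{d \<in> ?D. d dvd m div \<Prod>S}. (-1) ^ card S * p d)"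
      using L[OF S_div[OF S]] by (simp add: sum_distrib_left)
  qed
  also have "\<dots> = (\<Sum>d\<in>?D. \<Sum>S\<in>{S \<in> Pow ?P. d dvd m div \<Prod>S}. (-1) ^ card S * p d)"
    using m0 by (intro sum.swap_restrict) auto
  also have "\<dots> = (\<Sum>d\<in>?D. p d * (\<Sum>S\<in>Pow (prime_factors (m div d)). (-1) ^ card S))"
  proof (intro sum.cong refl)
    fix d assume "d \<in> ?D"
    then have "{S \<in> Pow ?P. d dvd m div \<Prod>S} = Pow (prime_factors (m div d))"
      using prime_factor_sets_dividing m0 by simp
    then show "(\<Sum>S\<in>{S \<in> Pow ?P. d dvd m div \<Prod>S}. (-1) ^ card S * p d)
        = p d * (\<Sum>S\<in>Pow (prime_factors (m div d)). (-1) ^ card S)"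
      by (simp add: sum_distrib_left mult.commute)
  qed
  also have "\<dots> = (\<Sum>d\<in>?D. if d = m then p d else 0)"
  proof (intro sum.cong refl)
    fix d assume "d \<in> ?D"
    then have "prime_factors (m div d) = {} \<longleftrightarrow> d = m"
      using m0 by (auto simp: prime_factorization_empty_iff)
    then show "p d * (\<Sum>S\<in>Pow (prime_factors (m div d)). (-1) ^ card S) = (if d = m then p d else 0)"
      by (simp add: sum_Pow_alternating)
  qed
  also have "\<dots> = p m" using m0 by simp
  finally show ?thesis .
qed

lemma Phi1_eq_prim_count: "m \<ge> 1 \<Longrightarrow> Phi1 m = prim_count m"
  unfolding Phi1_def by (rule Phi_divisor_sum_inversion) (use lucas_prim_count_sum in auto)


section \<open>Elementary bounds for Phi1\<close>

lemma lucas_divisor_sum_Phi1: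
  assumes "m \<ge> 1"
  shows "lucas m = (\<Sum>d | d dvd m. Phi1 d)"
proof -
  have "(\<Sum>d | d dvd m. Phi1 d) = (\<Sum>d | d dvd m. prim_count d)"
    using assms by (intro sum.cong refl) (auto simp: Phi1_eq_prim_count Suc_le_eq dvd_pos_nat)
  then show ?thesis using lucas_prim_count_sum[OF assms] by simp
qed

lemma Phi1_nonneg: "m \<ge> 1 \<Longrightarrow> 0 \<le> Phi1 m"
  by (simp add: Phi1_eq_prim_count prim_count_def)

lemma lucas_pos: "0 < lucas n"
  by (induction n rule: lucas.induct) simp_all

lemma lucas_mono:
  assumes "1 \<le> a" "a \<le> b"
  shows "lucas a \<le> lucas b"
  using assms(2)
proof (induction b rule: dec_induct)
  case (step n)
  then obtain k where "n = Suc k" using assms(1) by (cases n) auto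
  then show ?case using step.IH lucas_pos[of k] by simp
qed simp

lemma sum_lucas: "(\<Sum>d = 1..n. lucas d) = lucas (n + 2) - 3"
  by (induction n) (simp_all add: numeral_eq_Suc)

lemma proper_divisor_le_half:
  fixes d m :: nat
  assumes "m \<ge> 1" "d dvd m" "d \<noteq> m"
  shows "1 \<le> d \<and> d \<le> m div 2"
proof -
  obtain k where k: "m = d * k" using assms(2) by (rule dvdE)
  then have "k \<ge> 2" "d \<noteq> 0" using assms by (auto simp: not_less_eq_eq[symmetric])
  then have "d * 2 \<le> m" using k by (metis mult_le_mono2)
  then show ?thesis using \<open>d \<noteq> 0\<close> by linarith
qed

lemma lucas_split_Phi1:
  assumes "m \<ge> 1"
  shows "lucas m = Phi1 m + (\<Sum>d \<in> {d. d dvd m} - {m}. Phi1 d)"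
  using lucas_divisor_sum_Phi1[OF assms] sum.remove[of "{d. d dvd m}" m Phi1] assms by simp

lemma Phi1_le_lucas:
  assumes "m \<ge> 1"
  shows "Phi1 m \<le> lucas m"
proof -
  have "0 \<le> (\<Sum>d \<in> {d. d dvd m} - {m}. Phi1 d)"
    using assms by (intro sum_nonneg Phi1_nonneg) (auto simp: Suc_le_eq dvd_pos_nat)
  then show ?thesis using lucas_split_Phi1[OF assms] by simp
qed

text \<open>The proper divisors contribute at most the sum of the Lucas numbers up to m/2.\<close>
lemma lucas_le_Phi1:
  assumes m: "m \<ge> 1"
  shows "lucas m - (lucas (m div 2 + 2) - 3) \<le> Phi1 m"
proof -
  have "(\<Sum>d \<in> {d. d dvd m} - {m}. Phi1 d) \<le> (\<Sum>d \<in> {d. d dvd m} - {m}. lucas d)"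
    using proper_divisor_le_half[OF m] by (intro sum_mono Phi1_le_lucas) auto
  also have "\<dots> \<le> (\<Sum>d = 1..m div 2. lucas d)"
  proof (rule sum_mono2)
    show "{d. d dvd m} - {m} \<subseteq> {1..m div 2}"
    proof
      fix d assume "d \<in> {d. d dvd m} - {m}"
      then show "d \<in> {1..m div 2}" using proper_divisor_le_half[OF m, of d] by auto
    qed
  qed (use lucas_pos in \<open>auto simp: less_imp_le\<close>)
  finally show ?thesis using lucas_split_Phi1[OF m] sum_lucas[of "m div 2"] by linarith
qed

lemma Phi_prime_power:
  assumes "prime p" "0 < k"
  shows "Phi (p ^ k) a = a (p ^ k) - a (p ^ (k - 1))"
proof -
  have "prime_factors (p ^ k) = {p}"
    using assms by (simp add: prime_factorization_prime_power)
  moreover have "p ^ k div p = p ^ (k - 1)"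
    using assms by (cases k) (auto simp: prime_gt_0_nat)
  moreover have "Pow {p} = {{}, {p}}" by auto
  ultimately show ?thesis by (simp add: Phi_def)
qed

lemma lucas_values:
  "lucas 1 = 1" "lucas 4 = 7" "lucas 6 = 18" "lucas 7 = 29" "lucas 8 = 47"
  by (simp_all add: eval_nat_numeral)

lemma prime_7: "prime (7::nat)"
proof -
  have "{2..<7::nat} = {2, 3, 4, 5, 6}" by auto
  then show ?thesis by (simp add: prime_nat_iff')
qed

lemma Phi1_7: "Phi1 7 = 28"
  using Phi_prime_power[OF prime_7, of 1 lucas] lucas_values by (simp add: Phi1_def)

lemma Phi1_8: "Phi1 8 = 40"
  using Phi_prime_power[OF two_is_prime_nat, of 3 lucas] lucas_values by (simp add: Phi1_def)

text \<open>For m \<ge> 8 the crude bounds suffice: with a = lucas (m-2) and b = lucas (m-3),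
  Phi1 m \<le> 2a + b while Phi1 (m+1) \<ge> 2a + 2b + 3.\<close>
lemma Phi1_ratio_increasing_large:
  assumes "m \<ge> 8"
  shows "int (m + 1) * Phi1 m < int m * Phi1 (m + 1)"
proof -
  define n where "n = m - 3"
  have mn: "m = n + 3" and n5: "n \<ge> 5" using assms by (simp_all add: n_def)
  define a where "a = lucas (n + 1)"
  define b where "b = lucas n"
  have b_pos: "0 < b" by (simp add: b_def lucas_pos)
  have a_le: "a \<le> 2 * b"
  proof -
    obtain k where "n = Suc k" using n5 by (cases n) auto
    then show ?thesis using lucas_mono[of k n] n5 by (simp add: a_def b_def)
  qed
  have lucas_m: "lucas m = 2 * a + b" and lucas_m1: "lucas (m + 1) = 3 * a + 2 * b"
    by (simp_all add: mn a_def b_def eval_nat_numeral)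
  have "lucas ((m + 1) div 2 + 2) \<le> lucas (n + 1)"
    using mn n5 by (intro lucas_mono) auto
  then have lower: "2 * a + 2 * b + 3 \<le> Phi1 (m + 1)"
    using lucas_le_Phi1[of "m + 1"] lucas_m1 by (simp add: a_def)
  have upper: "Phi1 m \<le> 2 * a + b" using Phi1_le_lucas[of m] lucas_m assms by simp
  have "int (m + 1) * Phi1 m \<le> int (m + 1) * (2 * a + b)"
    using upper by (intro mult_left_mono) auto
  also have "\<dots> < int m * (2 * a + 2 * b + 3)"
  proof -
    have "8 * b \<le> int m * b" using assms b_pos by (intro mult_right_mono) auto
    moreover have "int m * (2 * a + 2 * b + 3) - int (m + 1) * (2 * a + b)
        = int m * b + 3 * int m - 2 * a - b"
      by (simp add: algebra_simps)
    ultimately show ?thesis using a_le b_pos by linarith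
  qed
  also have "\<dots> \<le> int m * Phi1 (m + 1)" using lower by (intro mult_left_mono) auto
  finally show ?thesis .
qed

text \<open>Part (c), monotonicity: the cases m = 6, 7 use the exact values Phi1 7 and Phi1 8.\<close>
theorem Phi1_over_m_increasing:
  assumes "m \<ge> 6"
  shows "real_of_int (Phi1 m) / real m < real_of_int (Phi1 (m + 1)) / real (m + 1)"
proof -
  have "int (m + 1) * Phi1 m < int m * Phi1 (m + 1)"
  proof -
    consider "m = 6" | "m = 7" | "m \<ge> 8" using assms by linarith
    then show ?thesis
    proof cases
      case 1
      then show ?thesis using Phi1_le_lucas[of 6] lucas_values Phi1_7 by simp
    next
      case 2
      then show ?thesis using Phi1_7 Phi1_8 by simp
    qed (rule Phi1_ratio_increasing_large)
  qed
  then have "real_of_int (int (m + 1) * Phi1 m) < real_of_int (int m * Phi1 (m + 1))"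
    by linarith
  then have "real (m + 1) * real_of_int (Phi1 m) < real m * real_of_int (Phi1 (m + 1))"
    by simp
  moreover have "0 < real m" using assms by simp
  ultimately show ?thesis by (simp add: field_simps)
qed


section \<open>Asymptotics of Phi1\<close>

definition phi :: real where "phi = (1 + sqrt 5) / 2"
definition psi :: real where "psi = (1 - sqrt 5) / 2"

lemma phi_gt_1: "1 < phi" and abs_psi_lt_1: "\<bar>psi\<bar> < 1"
proof -
  have "2 < sqrt 5" by (rule real_less_rsqrt) simp
  moreover have "sqrt 5 < 3" by (rule real_less_lsqrt) simp_all
  ultimately show "1 < phi" "\<bar>psi\<bar> < 1" by (auto simp: phi_def psi_def)
qed

lemma lucas_binet: "real_of_int (lucas n) = phi ^ n + psi ^ n"
proof (induction n rule: lucas.induct)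
  case (3 n)
  have "phi ^ Suc (Suc n) = phi ^ Suc n + phi ^ n" "psi ^ Suc (Suc n) = psi ^ Suc n + psi ^ n"
    by (simp_all add: phi_def psi_def field_simps power2_eq_square)
  then show ?case using 3 by simp
qed (simp_all add: phi_def psi_def field_simps)

lemma lucas_le_power: "real_of_int (lucas n) \<le> 2 * phi ^ n"
proof -
  have "psi ^ n \<le> \<bar>psi\<bar> ^ n" by (metis power_abs abs_ge_self)
  also have "\<dots> \<le> 1" using abs_psi_lt_1 by (intro power_le_one) auto
  finally have "psi ^ n \<le> 1" .
  moreover have "1 \<le> phi ^ n" using phi_gt_1 by simp
  ultimately show ?thesis using lucas_binet[of n] by simp
qed

lemma lucas_over_power: "(\<lambda>n. real_of_int (lucas n) / phi ^ n) \<longlonglongrightarrow> 1"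
proof -
  have "(\<lambda>n. (psi / phi) ^ n) \<longlonglongrightarrow> 0"
    using abs_psi_lt_1 phi_gt_1 by (intro LIMSEQ_power_zero) (simp add: divide_less_eq)
  then have "(\<lambda>n. 1 + (psi / phi) ^ n) \<longlonglongrightarrow> 1 + 0" by (intro tendsto_add) auto
  moreover have "real_of_int (lucas n) / phi ^ n = 1 + (psi / phi) ^ n" for n
    using phi_gt_1 by (simp add: lucas_binet field_simps)
  ultimately show ?thesis by simp
qed

text \<open>The proper divisors are negligible: |Phi1 m - lucas m| / phi^m is at most
  2 phi^2 (1/phi)^(m div 2).\<close>
lemma Phi1_lucas_error:
  assumes m: "m \<ge> 1"
  shows "\<bar>real_of_int (Phi1 m) / phi ^ m - real_of_int (lucas m) / phi ^ m\<bar>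
           \<le> 2 * phi\<^sup>2 * (1 / phi) ^ (m div 2)"
proof -
  let ?h = "m div 2"
  have pos: "0 < phi ^ ?h" "0 < phi ^ m" using phi_gt_1 by simp_all
  have "\<bar>real_of_int (Phi1 m) - real_of_int (lucas m)\<bar> \<le> real_of_int (lucas (?h + 2))"
    using Phi1_le_lucas[OF m] lucas_le_Phi1[OF m] by linarith
  also have "\<dots> \<le> 2 * phi ^ (?h + 2)" by (rule lucas_le_power)
  finally have num: "\<bar>real_of_int (Phi1 m) - real_of_int (lucas m)\<bar> \<le> 2 * phi ^ (?h + 2)" .
  have den: "phi ^ ?h * phi ^ ?h \<le> phi ^ m"
    unfolding power_add[symmetric] using phi_gt_1 by (intro power_increasing) auto
  have "\<bar>real_of_int (Phi1 m) / phi ^ m - real_of_int (lucas m) / phi ^ m\<bar>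
      = \<bar>real_of_int (Phi1 m) - real_of_int (lucas m)\<bar> / phi ^ m"
    using pos by (simp add: diff_divide_distrib[symmetric])
  also have "\<dots> \<le> 2 * phi ^ (?h + 2) / (phi ^ ?h * phi ^ ?h)"
    using num den pos by (intro frac_le) auto
  also have "\<dots> = 2 * phi\<^sup>2 * (1 / phi) ^ ?h"
    using pos by (simp add: power_add field_simps power2_eq_square)
  finally show ?thesis .
qed

lemma Phi1_over_power: "(\<lambda>m. real_of_int (Phi1 m) / phi ^ m) \<longlonglongrightarrow> 1"
proof -
  have "(\<lambda>m. (1 / phi) ^ (m div 2)) \<longlonglongrightarrow> 0"
  proof (rule filterlim_compose[of "\<lambda>n. (1 / phi) ^ n"])
    show "(\<lambda>n. (1 / phi) ^ n) \<longlonglongrightarrow> 0"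
      using phi_gt_1 by (intro LIMSEQ_realpow_zero) auto
    show "filterlim (\<lambda>m::nat. m div 2) at_top sequentially"
      unfolding filterlim_at_top eventually_sequentially
    proof
      fix Z :: nat
      show "\<exists>N. \<forall>n\<ge>N. Z \<le> n div 2" by (rule exI[of _ "2 * Z"]) auto
    qed
  qed
  then have bound: "(\<lambda>m. 2 * phi\<^sup>2 * (1 / phi) ^ (m div 2)) \<longlonglongrightarrow> 0"
    using tendsto_mult_left[of _ 0 sequentially "2 * phi\<^sup>2"] by simp
  have "(\<lambda>m. real_of_int (Phi1 m) / phi ^ m - real_of_int (lucas m) / phi ^ m) \<longlonglongrightarrow> 0"
  proof (rule tendsto_0_le[OF bound, where K = 1])
    show "\<forall>\<^sub>F m in sequentially. norm (real_of_int (Phi1 m) / phi ^ m - real_of_int (lucas m) / phi ^ m)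
        \<le> norm (2 * phi\<^sup>2 * (1 / phi) ^ (m div 2)) * 1"
      unfolding eventually_sequentially
    proof (intro exI allI impI)
      fix n :: nat assume "1 \<le> n"
      then show "norm (real_of_int (Phi1 n) / phi ^ n - real_of_int (lucas n) / phi ^ n)
          \<le> norm (2 * phi\<^sup>2 * (1 / phi) ^ (n div 2)) * 1"
        using Phi1_lucas_error[of n] abs_ge_self[of "2 * phi\<^sup>2 * (1 / phi) ^ (n div 2)"]
        unfolding real_norm_def mult_1_right by linarith
    qed
  qed
  from tendsto_add[OF this lucas_over_power] show ?thesis by simp
qed

lemma Phi1_ratio_eq:
  assumes "m \<ge> 1"
  shows "(real_of_int (Phi1 (m + 1)) / real (m + 1)) / (real_of_int (Phi1 m) / real m)
       = phi * ((real_of_int (Phi1 (Suc m)) / phi ^ Suc m) / (real_of_int (Phi1 m) / phi ^ m))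
           * (real m / real (Suc m))"
  using assms phi_gt_1 by (simp add: field_simps)

theorem Phi1_ratio_limit:
  "(\<lambda>m. (real_of_int (Phi1 (m + 1)) / real (m + 1)) / (real_of_int (Phi1 m) / real m))
     \<longlonglongrightarrow> (1 + sqrt 5) / 2"
proof -
  have "(\<lambda>m. phi * ((real_of_int (Phi1 (Suc m)) / phi ^ Suc m) / (real_of_int (Phi1 m) / phi ^ m))
           * (real m / real (Suc m))) \<longlonglongrightarrow> phi * (1 / 1) * 1"
    by (intro tendsto_intros LIMSEQ_Suc[OF Phi1_over_power] Phi1_over_power LIMSEQ_n_over_Suc_n) simp
  then have "(\<lambda>m. phi * ((real_of_int (Phi1 (Suc m)) / phi ^ Suc m) / (real_of_int (Phi1 m) / phi ^ m))
           * (real m / real (Suc m))) \<longlonglongrightarrow> (1 + sqrt 5) / 2"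
    by (simp add: phi_def)
  moreover have "\<forall>\<^sub>F m in sequentially.
      phi * ((real_of_int (Phi1 (Suc m)) / phi ^ Suc m) / (real_of_int (Phi1 m) / phi ^ m)) * (real m / real (Suc m))
      = (real_of_int (Phi1 (m + 1)) / real (m + 1)) / (real_of_int (Phi1 m) / real m)"
    unfolding eventually_sequentially using Phi1_ratio_eq by (intro exI[of _ 1]) auto
  ultimately show ?thesis by (rule Lim_transform_eventually)
qed


theorem theorem1:
  shows "(\<forall>m::nat. m \<ge> 1 \<longrightarrow>
            int (card {x \<in> {1..3::real}. (fmap ^^ m) x = x}) = lucas m)
    \<and> (\<forall>m::nat. m \<ge> 1 \<longrightarrow>
            real (card {orbit fmap x | x. x \<in> {1..3::real} \<and> has_min_period fmap m x})
              = real_of_int (Phi1 m) / real m)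
    \<and> (\<forall>m::nat. m \<ge> 6 \<longrightarrow>
            real_of_int (Phi1 m) / real m < real_of_int (Phi1 (m + 1)) / real (m + 1))
    \<and> ((\<lambda>m. (real_of_int (Phi1 (m + 1)) / real (m + 1)) / (real_of_int (Phi1 m) / real m))
         \<longlonglongrightarrow> (1 + sqrt 5) / 2)"
proof (intro conjI allI impI)
  fix m :: nat assume "m \<ge> 1"
  then show "int (card {x \<in> {1..3::real}. (fmap ^^ m) x = x}) = lucas m"
    by (rule card_fixed_points)
next
  fix m :: nat assume "m \<ge> 1"
  then show "real (card {orbit fmap x | x. x \<in> {1..3::real} \<and> has_min_period fmap m x})
      = real_of_int (Phi1 m) / real m"
    using card_orbits_fmap Phi1_eq_prim_count by simp
next
  fix m :: nat assume "m \<ge> 6"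
  then show "real_of_int (Phi1 m) / real m < real_of_int (Phi1 (m + 1)) / real (m + 1)"
    by (rule Phi1_over_m_increasing)
qed (rule Phi1_ratio_limit)

end
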